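(* Let $(\Gamma,M)$ be an E-GCM graph whose Coxeter group $W=W(\Gamma,M)$ is finite, with longest element $w_0$. Let $J\subseteq I_n$ and let $(w_0)_J$ be the longest element of $W_J$. Then for any $\lambda\in C_J$, every game sequence for $\lambda$ has length $\ell(w_0)-\ell((w_0)_J)$.
   Context: E-GCM $M=(M_{ij})_{i,j\in I_n}$: real, $M_{ii}=2$, $M_{ij}\le0$ ($i\ne j$), $M_{ij}\ne0\iff M_{ji}\ne0$, nonzero $M_{ij}M_{ji}$ either $\ge4$ or $=4\cos^2(\pi/m)$ with $m\ge3$ integer; nodes $\gamma_i$, adjacent iff $M_{ij}\ne0$. Positions $\lambda\in\mathbb{R}^n$; firing $\gamma_i$ allowed iff $\lambda_i>0$, replacing $\lambda_j$ by $\lambda_j-M_{ij}\lambda_i$. The numbers game fires nodes with positive population until none remain; a game sequence is the sequence of fired nodes. $W$: generators $s_i$, $s_i^2=e$, $(s_is_j)^{m_{ij}}=e$, $m_{ij}=k$ if $M_{ij}M_{ji}=4\cos^2(\pi/k)$ ($k\ge2$), $m_{ij}=\infty$ if $M_{ij}M_{ji}\ge4$; $\ell$ = length. $W_J=\langle s_j:j\in J\rangle$. $C_J$ = positions with $\lambda_j=0$ for $j\in J$ and $\lambda_i>0$ for $i\notin J$. *)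

theory Defs
  imports Complex_Main
begin

text \<open>Nodes are indexed by I_n = {0..<n}; M is an n x n real matrix given as a function.\<close>

definition egcm :: "(nat \<Rightarrow> nat \<Rightarrow> real) \<Rightarrow> nat \<Rightarrow> bool" where
  "egcm M n \<longleftrightarrow>
     (\<forall>i<n. M i i = 2) \<and>
     (\<forall>i<n. \<forall>j<n. i \<noteq> j \<longrightarrow>
        M i j \<le> 0 \<and> (M i j \<noteq> 0 \<longleftrightarrow> M j i \<noteq> 0) \<and>
        (M i j * M j i \<noteq> 0 \<longrightarrow>
           M i j * M j i \<ge> 4 \<or>
           (\<exists>m::nat. m \<ge> 3 \<and> M i j * M j i = 4 * (cos (pi / real m))^2)))"

text \<open>Coxeter group W as words over I_n modulo the defining relations
  s_i^2 = e and (s_i s_j)^k = e whenever M_ij M_ji = 4 cos^2(pi/k), k >= 2.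
  Since all generators are involutions, the monoid presentation gives the group.\<close>

definition cox_relators :: "(nat \<Rightarrow> nat \<Rightarrow> real) \<Rightarrow> nat \<Rightarrow> nat list set" where
  "cox_relators M n =
     {[i, i] | i. i < n} \<union>
     {concat (replicate k [i, j]) | i j k. i < n \<and> j < n \<and> i \<noteq> j \<and> k \<ge> 2 \<and>
        M i j * M j i = 4 * (cos (pi / real k))^2}"

definition cox_step :: "(nat \<Rightarrow> nat \<Rightarrow> real) \<Rightarrow> nat \<Rightarrow> (nat list \<times> nat list) set" where
  "cox_step M n = {(u @ r @ v, u @ v) | u r v. r \<in> cox_relators M n}"

definition cox_rel :: "(nat \<Rightarrow> nat \<Rightarrow> real) \<Rightarrow> nat \<Rightarrow> (nat list \<times> nat list) set" where
  "cox_rel M n = (cox_step M n \<union> (cox_step M n)\<inverse>)\<^sup>*"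

definition cox_group :: "(nat \<Rightarrow> nat \<Rightarrow> real) \<Rightarrow> nat \<Rightarrow> nat list set set" where
  "cox_group M n = lists {..<n} // cox_rel M n"

definition cox_length :: "nat list set \<Rightarrow> nat" where
  "cox_length c = (LEAST k. \<exists>w\<in>c. length w = k)"

definition parabolic :: "(nat \<Rightarrow> nat \<Rightarrow> real) \<Rightarrow> nat \<Rightarrow> nat set \<Rightarrow> nat list set set" where
  "parabolic M n J = {c \<in> cox_group M n. \<exists>w\<in>c. set w \<subseteq> J}"

definition longest_element :: "nat list set set \<Rightarrow> nat list set \<Rightarrow> bool" where
  "longest_element S w \<longleftrightarrow> w \<in> S \<and> (\<forall>v\<in>S. cox_length v \<le> cox_length w)"

definition fire :: "(nat \<Rightarrow> nat \<Rightarrow> real) \<Rightarrow> nat \<Rightarrow> (nat \<Rightarrow> real) \<Rightarrow> (nat \<Rightarrow> real)" where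
  "fire M i pos = (\<lambda>j. pos j - M i j * pos i)"

fun legal_play :: "(nat \<Rightarrow> nat \<Rightarrow> real) \<Rightarrow> nat \<Rightarrow> (nat \<Rightarrow> real) \<Rightarrow> nat list \<Rightarrow> bool" where
  "legal_play M n pos [] = True"
| "legal_play M n pos (i # s) = (i < n \<and> pos i > 0 \<and> legal_play M n (fire M i pos) s)"

definition play :: "(nat \<Rightarrow> nat \<Rightarrow> real) \<Rightarrow> (nat \<Rightarrow> real) \<Rightarrow> nat list \<Rightarrow> (nat \<Rightarrow> real)" where
  "play M pos s = fold (fire M) s pos"

definition terminal :: "nat \<Rightarrow> (nat \<Rightarrow> real) \<Rightarrow> bool" where
  "terminal n pos \<longleftrightarrow> (\<forall>i<n. \<not> pos i > 0)"

definition game_sequence :: "(nat \<Rightarrow> nat \<Rightarrow> real) \<Rightarrow> nat \<Rightarrow> (nat \<Rightarrow> real) \<Rightarrow> nat list \<Rightarrow> bool" where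
  "game_sequence M n pos s \<longleftrightarrow> legal_play M n pos s \<and> terminal n (play M pos s)"

definition infinite_game :: "(nat \<Rightarrow> nat \<Rightarrow> real) \<Rightarrow> nat \<Rightarrow> (nat \<Rightarrow> real) \<Rightarrow> (nat \<Rightarrow> nat) \<Rightarrow> bool" where
  "infinite_game M n pos f \<longleftrightarrow> (\<forall>k. legal_play M n pos (map f [0..<k]))"

definition in_C :: "nat \<Rightarrow> nat set \<Rightarrow> (nat \<Rightarrow> real) \<Rightarrow> bool" where
  "in_C n J pos \<longleftrightarrow> (\<forall>j\<in>J. pos j = 0) \<and> (\<forall>i<n. i \<notin> J \<longrightarrow> pos i > 0)"

end

theory Submission
  imports Defs "HOL-Computational_Algebra.Polynomial"
begin

text \<open>Two nodes of an E-GCM graph span a dihedral subsystem: fired alternately from a position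
  where both are positive, they either can be fired forever, or both alternating words of length
  m = m_ij are legal and are related by the braid relation. This diamond property gives Eriksson's
  strong convergence: all game sequences from a position are equivalent words of the same length,
  and no legal play is longer.

  A legal play from a regular strictly dominant position is a reduced word: every equivalent word
  can be turned into a legal play that is not longer, and two legal plays with the same end point
  have equal length, since played backwards from the negated end point both are game sequences.
  A position in C_J is not regular, but as W is finite it can be perturbed into a regular strictly
  dominant position that keeps every nonzero sign of every image. Prefixing a game sequence s with
  a reduced word of (w_0)_J played from the perturbed position yields a legal, hence reduced, word,
  so |s| + l((w_0)_J) <= l(w_0). Conversely every word, in particular a reduced word of w_0, is
  equivalent to x p with x a word in J legal from the perturbed position and p legal from the
  original one, so l(w_0) <= l((w_0)_J) + |s|.\<close>

section \<open>Plays of the numbers game\<close>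

lemma egcm_diag: "egcm M n \<Longrightarrow> i < n \<Longrightarrow> M i i = 2"
  unfolding egcm_def by blast

lemma play_Nil [simp]: "play M pos [] = pos"
  by (simp add: play_def)

lemma play_Cons [simp]: "play M pos (i # w) = play M (fire M i pos) w"
  by (simp add: play_def)

lemma play_append [simp]: "play M pos (u @ w) = play M (play M pos u) w"
  by (simp add: play_def)

lemma fire_involutive: "M i i = 2 \<Longrightarrow> fire M i (fire M i pos) = pos"
  by (simp add: fire_def)

lemma fire_eq_self: "pos i = 0 \<Longrightarrow> fire M i pos = pos"
  by (simp add: fire_def)

lemma play_rev_cancel: "egcm M n \<Longrightarrow> set w \<subseteq> {..<n} \<Longrightarrow> play M (play M pos w) (rev w) = pos"
  by (induction w arbitrary: pos) (auto simp: fire_involutive egcm_diag)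

lemma play_uminus: "play M (\<lambda>j. - pos j) w = (\<lambda>j. - play M pos w j)"
proof (induction w arbitrary: pos)
  case (Cons i w)
  have "fire M i (\<lambda>j. - pos j) = (\<lambda>j. - fire M i pos j)" by (simp add: fire_def)
  with Cons.IH show ?case by simp
qed simp

lemma play_add: "play M (\<lambda>j. p j + q j) w = (\<lambda>j. play M p w j + play M q w j)"
proof (induction w arbitrary: p q)
  case (Cons i w)
  have "fire M i (\<lambda>j. p j + q j) = (\<lambda>j. fire M i p j + fire M i q j)"
    by (simp add: fire_def algebra_simps)
  with Cons.IH show ?case by simp
qed simp

lemma play_scale: "play M (\<lambda>j. c * p j) w = (\<lambda>j. c * play M p w j)"
proof (induction w arbitrary: p)
  case (Cons i w)
  have "fire M i (\<lambda>j. c * p j) = (\<lambda>j. c * fire M i p j)" by (simp add: fire_def algebra_simps)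
  with Cons.IH show ?case by simp
qed simp

lemma play_sum: "play M (\<lambda>j. \<Sum>l\<in>S. f l j) w = (\<lambda>j. \<Sum>l\<in>S. play M (f l) w j)"
proof (induction w arbitrary: f)
  case (Cons i w)
  have "fire M i (\<lambda>j. \<Sum>l\<in>S. f l j) = (\<lambda>j. \<Sum>l\<in>S. fire M i (f l) j)"
    by (simp add: fire_def sum_subtractf sum_distrib_left)
  with Cons.IH show ?case by simp
qed simp

lemma legal_play_append:
  "legal_play M n pos (u @ w) \<longleftrightarrow> legal_play M n pos u \<and> legal_play M n (play M pos u) w"
  by (induction u arbitrary: pos) auto

lemma legal_play_snoc:
  "legal_play M n pos (u @ [i]) \<longleftrightarrow> legal_play M n pos u \<and> i < n \<and> 0 < play M pos u i"
  by (simp add: legal_play_append)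

lemma legal_play_set: "legal_play M n pos w \<Longrightarrow> set w \<subseteq> {..<n}"
  by (induction w arbitrary: pos) auto

lemma legal_play_rev:
  assumes "egcm M n" "legal_play M n pos w"
  shows "legal_play M n (\<lambda>j. - play M pos w j) (rev w)"
  using assms(2)
proof (induction w arbitrary: pos)
  case (Cons i w)
  then have "i < n" "0 < pos i" and IH: "legal_play M n (\<lambda>j. - play M pos (i # w) j) (rev w)"
    by auto
  moreover have "play M (\<lambda>j. - play M pos (i # w) j) (rev w) = (\<lambda>j. - fire M i pos j)"
    using legal_play_set[OF Cons.prems] assms(1) by (simp add: play_uminus play_rev_cancel)
  ultimately show ?case using egcm_diag[OF assms(1)] by (simp add: legal_play_snoc fire_def)
qed simp

lemma game_sequence_rev:
  assumes "egcm M n" "legal_play M n pos w" "\<forall>i<n. 0 \<le> pos i"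
  shows "game_sequence M n (\<lambda>j. - play M pos w j) (rev w)"
proof -
  have "play M (\<lambda>j. - play M pos w j) (rev w) = (\<lambda>j. - pos j)"
    using legal_play_set[OF assms(2)] assms(1) by (simp add: play_uminus play_rev_cancel)
  then show ?thesis
    using legal_play_rev[OF assms(1,2)] assms(3)
    by (simp add: game_sequence_def terminal_def not_less)
qed

lemma legal_play_extends_to_game:
  assumes "\<forall>t. legal_play M n pos t \<longrightarrow> length t \<le> K" "legal_play M n pos t"
  shows "\<exists>u. game_sequence M n pos (t @ u)"
  using assms(2)
proof (induction "K - length t" arbitrary: t rule: less_induct)
  case less
  show ?case
  proof (cases "terminal n (play M pos t)")
    case True
    then show ?thesis using less.prems by (intro exI[of _ "[]"]) (simp add: game_sequence_def)
  next
    case False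
    then obtain i where i: "i < n" "0 < play M pos t i" by (auto simp: terminal_def)
    then have legal: "legal_play M n pos (t @ [i])" using less.prems by (simp add: legal_play_snoc)
    then have "K - length (t @ [i]) < K - length t" using assms(1) by fastforce
    from less.hyps[OF this legal] obtain u where "game_sequence M n pos ((t @ [i]) @ u)" by blast
    then show ?thesis by (intro exI[of _ "i # u"]) simp
  qed
qed

section \<open>Words and the Coxeter relation\<close>

fun alt_word :: "nat \<Rightarrow> nat \<Rightarrow> nat \<Rightarrow> nat list" where
  "alt_word i j 0 = []"
| "alt_word i j (Suc m) = i # alt_word j i m"

lemma alt_word_snoc: "alt_word i j (Suc m) = alt_word i j m @ [if even m then i else j]"
  by (induction m arbitrary: i j) auto

lemma length_alt_word [simp]: "length (alt_word i j m) = m"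
  by (induction m arbitrary: i j) auto

lemma set_alt_word: "set (alt_word i j m) \<subseteq> {i, j}"
  by (induction m arbitrary: i j) auto

lemma rev_alt_word: "rev (alt_word j i m) = (if even m then alt_word i j m else alt_word j i m)"
proof (induction m arbitrary: i j)
  case (Suc m)
  have "rev (alt_word j i (Suc m)) = (if even m then j else i) # rev (alt_word j i m)"
    by (simp only: alt_word_snoc rev_append) simp
  then show ?case by (simp add: Suc.IH)
qed simp

lemma alt_word_add:
  "alt_word i j m @ alt_word (if even m then i else j) (if even m then j else i) p
     = alt_word i j (m + p)"
  by (induction m arbitrary: i j) auto

lemma concat_replicate_pair: "concat (replicate k [i, j]) = alt_word i j (2 * k)"
  by (induction k) auto

lemma cox_rel_refl [simp]: "(w, w) \<in> cox_rel M n"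
  by (simp add: cox_rel_def)

lemma cox_rel_sym: "(a, b) \<in> cox_rel M n \<Longrightarrow> (b, a) \<in> cox_rel M n"
  unfolding cox_rel_def by (meson sym_Un_converse sym_rtrancl symD)

lemma cox_rel_trans: "(a, b) \<in> cox_rel M n \<Longrightarrow> (b, c) \<in> cox_rel M n \<Longrightarrow> (a, c) \<in> cox_rel M n"
  unfolding cox_rel_def by (rule rtrancl_trans)

lemma cox_rel_invariant:
  assumes "(a, b) \<in> cox_rel M n" "P a"
    and "\<And>u r v. r \<in> cox_relators M n \<Longrightarrow> P (u @ r @ v) \<longleftrightarrow> P (u @ v)"
  shows "P b"
  using assms(1) unfolding cox_rel_def
proof (induction rule: rtrancl_induct)
  case (step y z)
  then show ?case using assms(3) by (auto simp: cox_step_def)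
qed (rule assms(2))

lemma cox_rel_relator: "r \<in> cox_relators M n \<Longrightarrow> (u @ r @ v, u @ v) \<in> cox_rel M n"
  unfolding cox_rel_def cox_step_def by blast

lemma square_relator: "i < n \<Longrightarrow> [i, i] \<in> cox_relators M n"
  by (auto simp: cox_relators_def)

lemma cox_rel_cancel_square: "i < n \<Longrightarrow> (u @ [i, i], u) \<in> cox_rel M n"
  using cox_rel_relator[OF square_relator, where u = u and v = "[]"] by simp

lemma cox_rel_cong:
  assumes "(a, b) \<in> cox_rel M n"
  shows "(u @ a @ v, u @ b @ v) \<in> cox_rel M n"
  using assms
proof (rule cox_rel_invariant)
  fix x r y assume "r \<in> cox_relators M n"
  then have "(u @ (x @ r @ y) @ v, u @ (x @ y) @ v) \<in> cox_rel M n"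
    using cox_rel_relator[of r M n "u @ x" "y @ v"] by simp
  then show "(u @ a @ v, u @ (x @ r @ y) @ v) \<in> cox_rel M n
      \<longleftrightarrow> (u @ a @ v, u @ (x @ y) @ v) \<in> cox_rel M n"
    by (meson cox_rel_sym cox_rel_trans)
qed simp

lemma cox_rel_append:
  "(a, b) \<in> cox_rel M n \<Longrightarrow> (c, d) \<in> cox_rel M n \<Longrightarrow> (a @ c, b @ d) \<in> cox_rel M n"
  using cox_rel_cong[of a b M n "[]" c] cox_rel_cong[of c d M n b "[]"] by (simp add: cox_rel_trans)

lemma cox_rel_Cons: "(a, b) \<in> cox_rel M n \<Longrightarrow> (i # a, i # b) \<in> cox_rel M n"
  using cox_rel_append[of "[i]" "[i]" M n a b] by simp

lemma rev_relator:
  assumes "r \<in> cox_relators M n"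
  shows "rev r \<in> cox_relators M n"
  using assms unfolding cox_relators_def
proof (elim UnE CollectE exE conjE)
  fix i j k assume r: "r = concat (replicate k [i, j])" and ij: "i < n" "j < n" "i \<noteq> j" "2 \<le> k"
    and M: "M i j * M j i = 4 * (cos (pi / real k))\<^sup>2"
  have "rev r = concat (replicate k [j, i])"
    using r rev_alt_word[of i j "2 * k"] by (simp add: concat_replicate_pair)
  moreover have "M j i * M i j = 4 * (cos (pi / real k))\<^sup>2" using M by (simp add: mult.commute)
  ultimately show "rev r \<in> {[i, i] |i. i < n} \<union> {concat (replicate k [i, j]) |i j k.
      i < n \<and> j < n \<and> i \<noteq> j \<and> 2 \<le> k \<and> M i j * M j i = 4 * (cos (pi / real k))\<^sup>2}"
    using ij by blast
qed auto

lemma cox_rel_rev: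
  assumes "(a, b) \<in> cox_rel M n"
  shows "(rev a, rev b) \<in> cox_rel M n"
  using assms
proof (rule cox_rel_invariant)
  fix u r v assume "r \<in> cox_relators M n"
  then have "(rev (u @ r @ v), rev (u @ v)) \<in> cox_rel M n"
    using cox_rel_relator[OF rev_relator, of r M n "rev v" "rev u"] by simp
  then show "(rev a, rev (u @ r @ v)) \<in> cox_rel M n \<longleftrightarrow> (rev a, rev (u @ v)) \<in> cox_rel M n"
    by (meson cox_rel_sym cox_rel_trans)
qed simp

lemma relator_set: "r \<in> cox_relators M n \<Longrightarrow> set r \<subseteq> {..<n}"
  unfolding cox_relators_def by (auto simp: concat_replicate_pair dest!: subsetD[OF set_alt_word])

lemma cox_rel_set: "(a, b) \<in> cox_rel M n \<Longrightarrow> set a \<subseteq> {..<n} \<Longrightarrow> set b \<subseteq> {..<n}"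
  by (erule cox_rel_invariant) (auto dest: relator_set)

lemma cox_rel_rev_append_self: "set w \<subseteq> {..<n} \<Longrightarrow> (rev w @ w, []) \<in> cox_rel M n"
proof (induction w)
  case (Cons x w)
  then have "(rev w @ [x, x] @ w, rev w @ w) \<in> cox_rel M n"
    by (intro cox_rel_relator square_relator) auto
  then show ?case using Cons by (auto intro: cox_rel_trans)
qed simp

lemma braid_relation:
  assumes "concat (replicate m [i, j]) \<in> cox_relators M n" "i < n" "j < n"
  shows "(alt_word i j m, alt_word j i m) \<in> cox_rel M n"
proof -
  have "set (alt_word j i m) \<subseteq> {..<n}" using set_alt_word[of j i m] assms(2,3) by auto
  then have "(alt_word i j m @ rev (alt_word j i m) @ alt_word j i m, alt_word i j m) \<in> cox_rel M n"
    using cox_rel_cong[OF cox_rel_rev_append_self, where u = "alt_word i j m" and v = "[]"]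
    by simp
  moreover have "alt_word i j m @ rev (alt_word j i m) = concat (replicate m [i, j])"
    using alt_word_add[of i j m m] by (auto simp: rev_alt_word concat_replicate_pair mult_2)
  ultimately have "(concat (replicate m [i, j]) @ alt_word j i m, alt_word i j m) \<in> cox_rel M n"
    by (metis append_assoc)
  moreover have "(concat (replicate m [i, j]) @ alt_word j i m, alt_word j i m) \<in> cox_rel M n"
    using cox_rel_relator[OF assms(1), where u = "[]"] by simp
  ultimately show ?thesis by (meson cox_rel_sym cox_rel_trans)
qed

section \<open>Two-node subsystems\<close>

text \<open>When i and j are fired alternately from a position with pos i = x and pos j = y, and
  a = - M i j, b = - M j i, the t-th firing (t \<ge> 1) moves the population dihedral_seq a b x y t.\<close>

fun dihedral_seq :: "real \<Rightarrow> real \<Rightarrow> real \<Rightarrow> real \<Rightarrow> nat \<Rightarrow> real" where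
  "dihedral_seq a b x y 0 = - y"
| "dihedral_seq a b x y (Suc 0) = x"
| "dihedral_seq a b x y (Suc (Suc t)) =
     (if even t then a else b) * dihedral_seq a b x y (Suc t) - dihedral_seq a b x y t"

definition fired_first :: "real \<Rightarrow> real \<Rightarrow> real \<Rightarrow> real \<Rightarrow> nat \<Rightarrow> real" where
  "fired_first a b x y L = (\<Sum>t<L. if even t then dihedral_seq a b x y (Suc t) else 0)"

definition fired_second :: "real \<Rightarrow> real \<Rightarrow> real \<Rightarrow> real \<Rightarrow> nat \<Rightarrow> real" where
  "fired_second a b x y L = (\<Sum>t<L. if even t then 0 else dihedral_seq a b x y (Suc t))"

lemma play_alt_word:
  fixes M :: "nat \<Rightarrow> nat \<Rightarrow> real" and pos :: "nat \<Rightarrow> real"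
  assumes "i \<noteq> j" "M i i = 2" "M j j = 2"
  defines "h \<equiv> dihedral_seq (- M i j) (- M j i) (pos i) (pos j)"
  shows "play M pos (alt_word i j L) = (\<lambda>l. pos l
            - M i l * fired_first (- M i j) (- M j i) (pos i) (pos j) L
            - M j l * fired_second (- M i j) (- M j i) (pos i) (pos j) L)
     \<and> play M pos (alt_word i j L) (if even L then i else j) = h (Suc L)
     \<and> play M pos (alt_word i j L) (if even L then j else i) = - h L"
proof (induction L)
  case 0
  then show ?case by (simp add: h_def fired_first_def fired_second_def)
next
  case (Suc L)
  define Q where "Q = play M pos (alt_word i j L)"
  have Q: "\<And>l. Q l = pos l - M i l * fired_first (- M i j) (- M j i) (pos i) (pos j) L
                              - M j l * fired_second (- M i j) (- M j i) (pos i) (pos j) L"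
          "Q (if even L then i else j) = h (Suc L)"
          "Q (if even L then j else i) = - h L"
    using Suc.IH unfolding Q_def by auto
  have P: "play M pos (alt_word i j (Suc L)) = fire M (if even L then i else j) Q"
    by (simp add: alt_word_snoc Q_def del: alt_word.simps)
  show ?case
  proof (cases "even L")
    case True
    have "fire M i Q l = pos l - M i l * fired_first (- M i j) (- M j i) (pos i) (pos j) (Suc L)
                             - M j l * fired_second (- M i j) (- M j i) (pos i) (pos j) (Suc L)" for l
      using Q True by (simp add: h_def fire_def fired_first_def fired_second_def algebra_simps)
    moreover have "fire M i Q j = h (Suc (Suc L))" "fire M i Q i = - h (Suc L)"
      using Q True assms by (simp_all add: fire_def algebra_simps)
    ultimately show ?thesis using P True by (simp add: fun_eq_iff)
  next
    case False
    have "fire M j Q l = pos l - M i l * fired_first (- M i j) (- M j i) (pos i) (pos j) (Suc L)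
                             - M j l * fired_second (- M i j) (- M j i) (pos i) (pos j) (Suc L)" for l
      using Q False by (simp add: h_def fire_def fired_first_def fired_second_def algebra_simps)
    moreover have "fire M j Q i = h (Suc (Suc L))" "fire M j Q j = - h (Suc L)"
      using Q False assms by (simp_all add: fire_def algebra_simps)
    ultimately show ?thesis using P False by (simp add: fun_eq_iff)
  qed
qed

lemma legal_play_alt_word:
  assumes "i \<noteq> j" "M i i = 2" "M j j = 2" "i < n" "j < n"
  shows "legal_play M n pos (alt_word i j L) \<longleftrightarrow>
           (\<forall>t<L. 0 < dihedral_seq (- M i j) (- M j i) (pos i) (pos j) (Suc t))"
proof (induction L)
  case (Suc L)
  have "legal_play M n pos (alt_word i j (Suc L)) \<longleftrightarrow> legal_play M n pos (alt_word i j L) \<and>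
      0 < play M pos (alt_word i j L) (if even L then i else j)"
    using assms by (simp add: alt_word_snoc legal_play_snoc del: alt_word.simps)
  then show ?case
    using Suc.IH play_alt_word[where M = M and pos = pos and L = L, OF assms(1-3)]
    by (auto simp: less_Suc_eq)
qed simp

fun chebyshev_seq :: "real \<Rightarrow> real \<Rightarrow> real \<Rightarrow> nat \<Rightarrow> real" where
  "chebyshev_seq c u v 0 = u"
| "chebyshev_seq c u v (Suc 0) = v"
| "chebyshev_seq c u v (Suc (Suc t)) = 2 * c * chebyshev_seq c u v (Suc t) - chebyshev_seq c u v t"

lemma dihedral_seq_chebyshev:
  assumes "0 < a" "0 < b"
  shows "dihedral_seq a b x y t = (if even t then sqrt a else sqrt b) *
           chebyshev_seq (sqrt a * sqrt b / 2) (- y / sqrt a) (x / sqrt b) t"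
proof (induction t rule: induct_nat_012)
  case (ge2 t)
  have "sqrt a * sqrt a = a" "sqrt b * sqrt b = b" using assms by simp_all
  with ge2 show ?case by (auto simp: algebra_simps)
qed (use assms in simp_all)

lemma chebyshev_seq_sin:
  "chebyshev_seq (cos th) u v t * sin th = v * sin (real t * th) - u * sin ((real t - 1) * th)"
proof (induction t rule: induct_nat_012)
  case (ge2 t)
  have rec: "sin (x + th) = 2 * cos th * sin x - sin (x - th)" for x
    by (simp add: sin_add sin_diff algebra_simps)
  have 1: "sin (real (Suc (Suc t)) * th) = 2 * cos th * sin (real (Suc t) * th) - sin (real t * th)"
    using rec[of "real (Suc t) * th"] by (simp add: algebra_simps)
  have 2: "sin ((real (Suc (Suc t)) - 1) * th)
      = 2 * cos th * sin ((real (Suc t) - 1) * th) - sin ((real t - 1) * th)"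
    using rec[of "(real (Suc t) - 1) * th"] by (simp add: algebra_simps)
  have "chebyshev_seq (cos th) u v (Suc (Suc t)) * sin th
      = 2 * cos th * (chebyshev_seq (cos th) u v (Suc t) * sin th)
        - chebyshev_seq (cos th) u v t * sin th"
    by (simp add: algebra_simps)
  also have "\<dots> = v * sin (real (Suc (Suc t)) * th) - u * sin ((real (Suc (Suc t)) - 1) * th)"
    unfolding ge2 1 2 by (simp add: algebra_simps)
  finally show ?case .
qed simp_all

lemma sum_sin_period_eq_0:
  assumes "real k * th = pi" "sin th \<noteq> 0"
  shows "(\<Sum>s<k. sin (x + 2 * real s * th)) = 0"
proof -
  define F where "F s = cos (x + (2 * real s - 1) * th)" for s :: nat
  have "2 * sin th * sin (x + 2 * real s * th) = F s - F (Suc s)" for s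
    by (simp add: F_def cos_add cos_diff algebra_simps)
  then have "2 * sin th * (\<Sum>s<k. sin (x + 2 * real s * th)) = F 0 - F k"
    by (simp add: sum_distrib_left sum_lessThan_telescope')
  also have "F k = F 0"
  proof -
    have "x + (2 * real k - 1) * th = (x - th) + 2 * pi" using assms(1) by (simp add: algebra_simps)
    then show ?thesis by (simp only: F_def cos_periodic) simp
  qed
  finally show ?thesis using assms(2) by simp
qed

lemma chebyshev_seq_sum_eq_0:
  assumes "real k * th = pi" "sin th \<noteq> 0"
  shows "(\<Sum>s<k. chebyshev_seq (cos th) u v (2 * s + r)) = 0"
proof -
  have "chebyshev_seq (cos th) u v (2 * s + r) * sin th
      = v * sin (real r * th + 2 * real s * th)
        - u * sin ((real r - 1) * th + 2 * real s * th)" for s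
    using chebyshev_seq_sin[of th u v "2 * s + r"] by (simp add: algebra_simps)
  then have "(\<Sum>s<k. chebyshev_seq (cos th) u v (2 * s + r)) * sin th
      = v * (\<Sum>s<k. sin (real r * th + 2 * real s * th))
        - u * (\<Sum>s<k. sin ((real r - 1) * th + 2 * real s * th))"
    by (simp add: sum_distrib_right sum_distrib_left sum_subtractf)
  also have "\<dots> = 0" using sum_sin_period_eq_0[OF assms] by simp
  finally show ?thesis using assms(2) by simp
qed

lemma sum_lessThan_double: "(\<Sum>t<2 * k. f t) = (\<Sum>s<k. f (2 * s) + f (2 * s + 1))"
  for f :: "nat \<Rightarrow> 'a::comm_monoid_add"
  by (induction k) (auto simp: algebra_simps)

lemma fired_eq_0:
  assumes "0 < a" "0 < b" "sqrt a * sqrt b / 2 = cos th" "real k * th = pi" "sin th \<noteq> 0"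
  shows "fired_first a b x y (2 * k) = 0" and "fired_second a b x y (2 * k) = 0"
proof -
  let ?g = "chebyshev_seq (cos th) (- y / sqrt a) (x / sqrt b)"
  have h: "dihedral_seq a b x y t = (if even t then sqrt a else sqrt b) * ?g t" for t
    using dihedral_seq_chebyshev[OF assms(1,2)] assms(3) by simp
  have "fired_first a b x y (2 * k) = sqrt b * (\<Sum>s<k. ?g (2 * s + 1))"
    by (simp add: fired_first_def sum_lessThan_double h sum_distrib_left del: dihedral_seq.simps)
  moreover have "(\<Sum>s<k. ?g (2 * s + 1)) = 0" by (rule chebyshev_seq_sum_eq_0[OF assms(4,5)])
  ultimately show "fired_first a b x y (2 * k) = 0" by simp
  have "fired_second a b x y (2 * k) = sqrt a * (\<Sum>s<k. ?g (2 * s + 2))"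
    by (simp add: fired_second_def sum_lessThan_double h sum_distrib_left del: dihedral_seq.simps)
  moreover have "(\<Sum>s<k. ?g (2 * s + 2)) = 0" by (rule chebyshev_seq_sum_eq_0[OF assms(4,5)])
  ultimately show "fired_second a b x y (2 * k) = 0" by simp
qed

lemma sin_multiple_pi_div_nonneg: "s \<le> m \<Longrightarrow> 0 \<le> sin (real s * (pi / real m))"
  by (cases "m = 0") (auto intro!: sin_ge_zero simp: field_simps)

lemma sin_multiple_pi_div_pos: "0 < s \<Longrightarrow> s < m \<Longrightarrow> 0 < sin (real s * (pi / real m))"
  by (auto intro!: sin_gt_zero simp: field_simps)

lemma cos_pi_div_pos:
  assumes "3 \<le> k"
  shows "0 < cos (pi / real k)"
proof (rule cos_gt_zero_pi)
  have "0 < pi / real k" using assms by simp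
  then show "- (pi / 2) < pi / real k" using pi_gt_zero by linarith
  show "pi / real k < pi / 2" using assms by (simp add: divide_less_eq)
qed

lemma sqrt_mult_eq_cos:
  assumes "2 \<le> k" "0 \<le> a" "0 \<le> b" "a * b = 4 * (cos (pi / real k))\<^sup>2"
  shows "sqrt a * sqrt b / 2 = cos (pi / real k)"
proof -
  have "0 < pi / real k" "pi / real k \<le> pi / 2" using assms(1) by (simp_all add: divide_le_eq)
  then have "0 \<le> cos (pi / real k)" by (intro cos_ge_zero) auto
  have "sqrt a * sqrt b = sqrt ((2 * cos (pi / real k))\<^sup>2)"
    using assms(4) by (simp only: real_sqrt_mult[symmetric] power_mult_distrib) simp
  also have "\<dots> = 2 * cos (pi / real k)" using \<open>0 \<le> cos (pi / real k)\<close> by (subst real_sqrt_abs) simp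
  finally show ?thesis by simp
qed

lemma egcm_pair_cases:
  assumes "egcm M n" "i < n" "j < n" "i \<noteq> j"
  obtains (commuting) "M i j = 0" "M j i = 0"
    | (infinite) "0 < - M i j" "0 < - M j i" "4 \<le> M i j * M j i"
    | (finite) m where "3 \<le> m" "0 < - M i j" "0 < - M j i"
        "M i j * M j i = 4 * (cos (pi / real m))\<^sup>2"
proof -
  have "M i j \<le> 0" "M j i \<le> 0" "M i j = 0 \<longleftrightarrow> M j i = 0"
    "M i j * M j i \<noteq> 0 \<Longrightarrow> 4 \<le> M i j * M j i \<or> (\<exists>m\<ge>3. M i j * M j i = 4 * (cos (pi / real m))\<^sup>2)"
    using assms unfolding egcm_def by auto
  then show ?thesis using that by (cases "M i j = 0") (auto simp: less_le)
qed

lemma play_relator: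
  assumes "egcm M n" "r \<in> cox_relators M n"
  shows "play M pos r = pos"
  using assms(2) unfolding cox_relators_def
proof (elim UnE CollectE exE conjE)
  fix i j k assume r: "r = concat (replicate k [i, j])" and ij: "i < n" "j < n" "i \<noteq> j"
    and k: "2 \<le> k" and Mk: "M i j * M j i = 4 * (cos (pi / real k))\<^sup>2"
  let ?a = "- M i j" and ?b = "- M j i"
  have fired: "fired_first ?a ?b (pos i) (pos j) (2 * k) = 0 \<and>
                fired_second ?a ?b (pos i) (pos j) (2 * k) = 0"
    using assms(1) ij
  proof (cases rule: egcm_pair_cases)
    case commuting
    then have "2 * k = Suc (Suc (Suc (Suc 0)))"
      using Mk k cos_pi_div_pos[of k] by (cases "3 \<le> k") auto
    then show ?thesis using commuting by (simp add: fired_first_def fired_second_def)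
  qed (use fired_eq_0[of ?a ?b] sqrt_mult_eq_cos[OF k] Mk k sin_multiple_pi_div_pos[of 1 k]
        in simp)+
  have "M i i = 2" "M j j = 2" using egcm_diag[OF assms(1)] ij by auto
  then show "play M pos r = pos"
    using r fired play_alt_word[where M = M and pos = pos and L = "2 * k", OF ij(3)]
    by (simp add: concat_replicate_pair)
next
  fix i assume "r = [i, i]" "i < n"
  then show "play M pos r = pos" using egcm_diag[OF assms(1)] by (simp add: fire_involutive)
qed

lemma play_cox_rel:
  assumes "egcm M n" "(u, w) \<in> cox_rel M n"
  shows "play M pos u = play M pos w"
  using assms(2) by (rule cox_rel_invariant) (simp_all add: play_relator[OF assms(1)])

lemma dihedral_seq_pos_finite:
  assumes "0 < a" "0 < b" "2 \<le> m" "sqrt a * sqrt b / 2 = cos (pi / real m)" "0 < x" "0 < y"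
    and "1 \<le> t" "t \<le> m"
  shows "0 < dihedral_seq a b x y t"
proof -
  let ?th = "pi / real m"
  let ?g = "chebyshev_seq (cos ?th) (- y / sqrt a) (x / sqrt b)"
  have "0 \<le> sin (real t * ?th)" "0 \<le> sin (real (t - 1) * ?th)"
    using sin_multiple_pi_div_nonneg[of t m] sin_multiple_pi_div_nonneg[of "t - 1" m] assms(8)
    by auto
  moreover have "0 < sin (real t * ?th) \<or> 0 < sin (real (t - 1) * ?th)"
    using sin_multiple_pi_div_pos[of t m] sin_multiple_pi_div_pos[of "t - 1" m] assms(3,7,8)
    by (cases "t = m") auto
  moreover have "0 < x / sqrt b" "0 < y / sqrt a" using assms by auto
  ultimately have "0 < x / sqrt b * sin (real t * ?th) + y / sqrt a * sin (real (t - 1) * ?th)"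
    by (smt (verit) mult_pos_pos mult_nonneg_nonneg)
  also have "\<dots> = ?g t * sin ?th"
    using chebyshev_seq_sin[of ?th "- y / sqrt a" "x / sqrt b" t] assms(7) by simp
  finally have "0 < ?g t"
    using sin_multiple_pi_div_pos[of 1 m] assms(3) by (simp add: zero_less_mult_iff)
  then show ?thesis using dihedral_seq_chebyshev[OF assms(1,2)] assms(1,2,4) by simp
qed

lemma chebyshev_seq_mono:
  assumes "1 \<le> c" "u < 0" "0 < v"
  shows "0 < chebyshev_seq c u v (Suc t) \<and> chebyshev_seq c u v t \<le> chebyshev_seq c u v (Suc t)"
proof (induction t)
  case (Suc t)
  have "2 * chebyshev_seq c u v (Suc t) \<le> 2 * c * chebyshev_seq c u v (Suc t)"
    using Suc assms(1) by (intro mult_right_mono) auto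
  moreover have "chebyshev_seq c u v (Suc (Suc t))
      = 2 * c * chebyshev_seq c u v (Suc t) - chebyshev_seq c u v t"
    by simp
  ultimately show ?case using Suc by linarith
qed (use assms in simp)

lemma dihedral_seq_pos_infinite:
  assumes "0 < a" "0 < b" "4 \<le> a * b" "0 < x" "0 < y"
  shows "0 < dihedral_seq a b x y (Suc t)"
proof -
  have "2 \<le> sqrt (a * b)" using real_sqrt_le_mono[OF assms(3)] by simp
  then have "1 \<le> sqrt a * sqrt b / 2" by (simp add: real_sqrt_mult)
  then have "0 < chebyshev_seq (sqrt a * sqrt b / 2) (- y / sqrt a) (x / sqrt b) (Suc t)"
    using chebyshev_seq_mono assms by (simp add: divide_neg_pos)
  then show ?thesis using dihedral_seq_chebyshev[OF assms(1,2), of x y "Suc t"] assms(1,2) by simp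
qed

lemma braid_relator:
  "i < n \<Longrightarrow> j < n \<Longrightarrow> i \<noteq> j \<Longrightarrow> 2 \<le> k \<Longrightarrow> M i j * M j i = 4 * (cos (pi / real k))\<^sup>2 \<Longrightarrow>
     concat (replicate k [i, j]) \<in> cox_relators M n"
  unfolding cox_relators_def by blast

lemma dihedral_alternatives:
  assumes "egcm M n" "i < n" "j < n" "i \<noteq> j" "0 < pos i" "0 < pos j"
  shows "(\<exists>m\<ge>2. legal_play M n pos (alt_word i j m) \<and> legal_play M n pos (alt_word j i m) \<and>
            (alt_word i j m, alt_word j i m) \<in> cox_rel M n)
         \<or> (\<forall>L. legal_play M n pos (alt_word i j L))"
  using assms(1-4)
proof (cases rule: egcm_pair_cases)
  have d: "M i i = 2" "M j j = 2" using egcm_diag[OF assms(1)] assms(2,3) by auto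
  note legal_ij = legal_play_alt_word[where M = M, OF assms(4) d assms(2,3)]
  note legal_ji = legal_play_alt_word[where M = M, OF assms(4)[symmetric] d(2,1) assms(3,2)]
  {
    case commuting
    have "legal_play M n pos (alt_word i j 2)" "legal_play M n pos (alt_word j i 2)"
      unfolding legal_ij legal_ji using commuting assms(5,6)
      by (auto simp: less_Suc_eq numeral_2_eq_2)
    moreover have "(alt_word i j 2, alt_word j i 2) \<in> cox_rel M n"
      using commuting assms(2-4) by (intro braid_relation braid_relator) auto
    ultimately show ?thesis by (intro disjI1 exI[of _ 2]) simp
  next
    case infinite
    then show ?thesis
      unfolding legal_ij using dihedral_seq_pos_infinite[of "- M i j" "- M j i"] assms(5,6) by simp
  next
    case (finite m)
    have m: "2 \<le> m" using finite by simp
    have "sqrt (- M i j) * sqrt (- M j i) / 2 = cos (pi / real m)"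
         "sqrt (- M j i) * sqrt (- M i j) / 2 = cos (pi / real m)"
      using sqrt_mult_eq_cos[OF m, of "- M i j" "- M j i"] finite by (simp_all add: mult.commute)
    then have "legal_play M n pos (alt_word i j m)" "legal_play M n pos (alt_word j i m)"
      unfolding legal_ij legal_ji
      using dihedral_seq_pos_finite[OF finite(2,3) m] dihedral_seq_pos_finite[OF finite(3,2) m]
        assms(5,6)
      by auto
    moreover have "(alt_word i j m, alt_word j i m) \<in> cox_rel M n"
      using finite m assms(2-4) by (intro braid_relation braid_relator) auto
    ultimately show ?thesis using m by blast
  }
qed

section \<open>Strong convergence\<close>

text \<open>The diamond step of strong convergence; the last three assumptions are the induction
  hypothesis for the game sequence i # s.\<close>

lemma game_exchange:
  assumes "egcm M n" "i < n" "j < n" "0 < pos i" "0 < pos j"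
    and game: "game_sequence M n (fire M i pos) s"
    and longest: "\<forall>t. legal_play M n (fire M i pos) t \<longrightarrow> length t \<le> length s"
    and unique: "\<forall>t. game_sequence M n (fire M i pos) t \<longrightarrow>
                    length t = length s \<and> (t, s) \<in> cox_rel M n"
  shows "\<exists>u. game_sequence M n (fire M j pos) u \<and> length u = length s \<and>
             (j # u, i # s) \<in> cox_rel M n"
proof (cases "i = j")
  case True
  then show ?thesis using game by (intro exI[of _ s]) simp
next
  case False
  from dihedral_alternatives[OF assms(1-3) False assms(4,5)] show ?thesis
  proof (elim disjE exE conjE)
    assume "\<forall>L. legal_play M n pos (alt_word i j L)"
    then have "legal_play M n (fire M i pos) (alt_word j i (Suc (length s)))"
      by (metis alt_word.simps(2) legal_play.simps(2))
    then show ?thesis using longest by fastforce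
  next
    fix m assume m: "2 \<le> m" and legal_ij: "legal_play M n pos (alt_word i j m)"
      and legal_ji: "legal_play M n pos (alt_word j i m)"
      and braid: "(alt_word i j m, alt_word j i m) \<in> cox_rel M n"
    obtain m' where m': "m = Suc m'" using m by (cases m) auto
    have "legal_play M n (fire M i pos) (alt_word j i m')" using legal_ij m' by simp
    then obtain u where game_u: "game_sequence M n (fire M i pos) (alt_word j i m' @ u)"
      using legal_play_extends_to_game[OF longest] by blast
    then have len: "length (alt_word j i m' @ u) = length s"
      and rel: "(alt_word j i m' @ u, s) \<in> cox_rel M n"
      using unique by blast+
    have "play M pos (alt_word i j m) = play M pos (alt_word j i m)"
      by (rule play_cox_rel[OF assms(1) braid])
    then have "game_sequence M n pos (alt_word j i m @ u)"
      using game_u legal_ji m' by (simp add: game_sequence_def legal_play_append)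
    then have "game_sequence M n (fire M j pos) (alt_word i j m' @ u)"
      using m' by (simp add: game_sequence_def)
    moreover have "(j # alt_word i j m' @ u, i # s) \<in> cox_rel M n"
      using cox_rel_append[OF cox_rel_sym[OF braid], of u u] cox_rel_Cons[OF rel, of i] m'
      by (auto intro: cox_rel_trans)
    ultimately show ?thesis using len by (intro exI[of _ "alt_word i j m' @ u"]) simp
  qed
qed

lemma strong_convergence:
  assumes "egcm M n" "game_sequence M n pos s"
  shows "(\<forall>t. legal_play M n pos t \<longrightarrow> length t \<le> length s) \<and>
         (\<forall>t. game_sequence M n pos t \<longrightarrow> length t = length s \<and> (t, s) \<in> cox_rel M n)"
  using assms(2)
proof (induction "length s" arbitrary: pos s rule: less_induct)
  case less
  show ?case
  proof (cases s)
    case Nil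
    then have "legal_play M n pos t \<Longrightarrow> t = []" for t
      using less.prems by (cases t) (auto simp: game_sequence_def terminal_def)
    then show ?thesis using Nil by (fastforce simp: game_sequence_def)
  next
    case (Cons i s')
    have i: "i < n" "0 < pos i" and game_s': "game_sequence M n (fire M i pos) s'"
      using less.prems Cons by (auto simp: game_sequence_def)
    have IH_s': "(\<forall>t. legal_play M n (fire M i pos) t \<longrightarrow> length t \<le> length s') \<and>
        (\<forall>t. game_sequence M n (fire M i pos) t \<longrightarrow> length t = length s' \<and> (t, s') \<in> cox_rel M n)"
      using less.hyps[OF _ game_s'] Cons by simp
    have "length t \<le> length s \<and>
          (game_sequence M n pos t \<longrightarrow> length t = length s \<and> (t, s) \<in> cox_rel M n)"
      if legal: "legal_play M n pos t" for t
    proof (cases t)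
      case Nil
      then show ?thesis using i by (auto simp: game_sequence_def terminal_def)
    next
      case (Cons j t')
      then have j: "j < n" "0 < pos j" and legal_t': "legal_play M n (fire M j pos) t'"
        using legal by auto
      obtain u where u: "game_sequence M n (fire M j pos) u" "length u = length s'"
        "(j # u, s) \<in> cox_rel M n"
        using game_exchange[OF assms(1) i(1) j(1) i(2) j(2) game_s'] IH_s' \<open>s = i # s'\<close> by blast
      have "length u < length s" using u(2) \<open>s = i # s'\<close> by simp
      note IH_u = less.hyps[OF this u(1)]
      have "length t' \<le> length u" using IH_u legal_t' by blast
      moreover have "length t = length s \<and> (t, s) \<in> cox_rel M n" if "game_sequence M n pos t"
      proof -
        have "game_sequence M n (fire M j pos) t'" using that Cons by (simp add: game_sequence_def)
        then have "length t' = length u" "(t', u) \<in> cox_rel M n" using IH_u by blast+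
        then show ?thesis
          using u Cons \<open>s = i # s'\<close> cox_rel_trans[OF cox_rel_Cons u(3)] by simp
      qed
      ultimately show ?thesis using u(2) Cons \<open>s = i # s'\<close> by simp
    qed
    then show ?thesis by (auto simp: game_sequence_def)
  qed
qed

lemma game_sequence_length_max:
  "egcm M n \<Longrightarrow> game_sequence M n pos s \<Longrightarrow> legal_play M n pos t \<Longrightarrow> length t \<le> length s"
  using strong_convergence by blast

lemma game_sequences_equivalent:
  "egcm M n \<Longrightarrow> game_sequence M n pos s \<Longrightarrow> game_sequence M n pos t \<Longrightarrow>
     length t = length s \<and> (t, s) \<in> cox_rel M n"
  using strong_convergence by blast

lemma legal_play_extends_to_game_sequence:
  assumes "egcm M n" "game_sequence M n pos s" "legal_play M n pos t"
  obtains u where "game_sequence M n pos (t @ u)"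
  using legal_play_extends_to_game[OF _ assms(3)] game_sequence_length_max[OF assms(1,2)] by blast

section \<open>Legal plays from regular positions are reduced\<close>

abbreviation cox_class :: "(nat \<Rightarrow> nat \<Rightarrow> real) \<Rightarrow> nat \<Rightarrow> nat list \<Rightarrow> nat list set" where
  "cox_class M n w \<equiv> cox_rel M n `` {w}"

lemma cox_class_eq: "(a, b) \<in> cox_rel M n \<Longrightarrow> cox_class M n a = cox_class M n b"
  by (auto intro: cox_rel_trans cox_rel_sym)

lemma cox_class_in_group: "set w \<subseteq> {..<n} \<Longrightarrow> cox_class M n w \<in> cox_group M n"
  unfolding cox_group_def by (rule quotientI) (simp add: in_lists_conv_set subset_iff)

lemma cox_group_elem_eq_class: "c \<in> cox_group M n \<Longrightarrow> v \<in> c \<Longrightarrow> c = cox_class M n v"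
  unfolding cox_group_def by (auto elim!: quotientE intro: cox_rel_trans cox_rel_sym)

lemma cox_length_le_length: "cox_length (cox_class M n w) \<le> length w"
  unfolding cox_length_def by (rule Least_le) auto

lemma cox_length_witness: "\<exists>t. (w, t) \<in> cox_rel M n \<and> length t = cox_length (cox_class M n w)"
proof -
  have "\<exists>t\<in>cox_class M n w. length t = cox_length (cox_class M n w)"
    unfolding cox_length_def by (rule LeastI_ex) (use cox_rel_refl in blast)
  then show ?thesis by auto
qed

lemma cox_group_reduced_word:
  assumes "c \<in> cox_group M n"
  shows "\<exists>r. set r \<subseteq> {..<n} \<and> c = cox_class M n r \<and> length r = cox_length c"
proof -
  obtain w where w: "w \<in> lists {..<n}" "c = cox_class M n w"
    using assms unfolding cox_group_def by (rule quotientE)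
  obtain r where "(w, r) \<in> cox_rel M n" "length r = cox_length (cox_class M n w)"
    using cox_length_witness by blast
  then show ?thesis using w cox_rel_set cox_class_eq by (metis in_lists_conv_set subsetI)
qed

text \<open>Regular in the sense of reflection groups: the position lies on no reflecting hyperplane.\<close>

definition regular_position :: "(nat \<Rightarrow> nat \<Rightarrow> real) \<Rightarrow> nat \<Rightarrow> (nat \<Rightarrow> real) \<Rightarrow> bool" where
  "regular_position M n lam \<longleftrightarrow> (\<forall>w k. set w \<subseteq> {..<n} \<longrightarrow> k < n \<longrightarrow> play M lam w k \<noteq> 0)"

text \<open>By strong convergence, the game sequence rev q from the negated end position can be
  rearranged to start with i.\<close>

lemma negative_coordinate_shortens:
  assumes "egcm M n" "\<forall>k<n. 0 \<le> lam k" "legal_play M n lam q" "i < n" "play M lam q i < 0"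
  shows "\<exists>y. legal_play M n lam y \<and> (q @ [i], y) \<in> cox_rel M n \<and> length y + 1 = length q"
proof -
  define nu where "nu = (\<lambda>j. - play M lam q j)"
  have game_q: "game_sequence M n nu (rev q)"
    unfolding nu_def by (rule game_sequence_rev[OF assms(1,3,2)])
  have "legal_play M n nu [i]" using assms(4,5) by (simp add: nu_def)
  then obtain z where game_z: "game_sequence M n nu ([i] @ z)"
    using legal_play_extends_to_game_sequence[OF assms(1) game_q] by blast
  then have len: "length (i # z) = length q" and rel: "(i # z, rev q) \<in> cox_rel M n"
    using game_sequences_equivalent[OF assms(1) game_q] by fastforce+
  have "play M nu (i # z) = play M nu (rev q)" by (rule play_cox_rel[OF assms(1) rel])
  also have "\<dots> = (\<lambda>j. - lam j)"
    using play_rev_cancel[OF assms(1) legal_play_set[OF assms(3)]] by (simp add: nu_def play_uminus)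
  finally have "legal_play M n lam (rev (i # z))"
    using legal_play_rev[OF assms(1), of nu "i # z"] game_z by (simp add: game_sequence_def)
  moreover have "(q @ [i], rev z) \<in> cox_rel M n"
  proof -
    have "(q @ [i], rev z @ [i, i]) \<in> cox_rel M n"
      using cox_rel_append[OF cox_rel_sym[OF cox_rel_rev[OF rel]] cox_rel_refl, of "[i]"] by simp
    then show ?thesis using cox_rel_cancel_square[OF assms(4), where u = "rev z"] cox_rel_trans by blast
  qed
  ultimately show ?thesis using len by (intro exI[of _ "rev z"]) (simp add: legal_play_append)
qed

lemma legal_play_representative:
  assumes "egcm M n" "regular_position M n lam" "\<forall>k<n. 0 \<le> lam k" "set t \<subseteq> {..<n}"
  shows "\<exists>q. legal_play M n lam q \<and> (t, q) \<in> cox_rel M n \<and> length q \<le> length t"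
  using assms(4)
proof (induction t rule: rev_induct)
  case (snoc i t)
  then obtain q where q: "legal_play M n lam q" "(t, q) \<in> cox_rel M n" "length q \<le> length t"
    by auto
  have i: "i < n" using snoc.prems by simp
  have rel: "(t @ [i], q @ [i]) \<in> cox_rel M n" using cox_rel_append[OF q(2) cox_rel_refl] .
  have "play M lam q i \<noteq> 0"
    using assms(2) legal_play_set[OF q(1)] i unfolding regular_position_def by blast
  then consider "0 < play M lam q i" | "play M lam q i < 0" by linarith
  then show ?case
  proof cases
    case 1
    then have "legal_play M n lam (q @ [i])" using q(1) i by (simp add: legal_play_snoc)
    then show ?thesis using rel q(3) by (intro exI[of _ "q @ [i]"]) simp
  next
    case 2
    then obtain y where y: "legal_play M n lam y" "(q @ [i], y) \<in> cox_rel M n"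
        "length y + 1 = length q"
      using negative_coordinate_shortens[OF assms(1,3) q(1) i] by blast
    then show ?thesis using cox_rel_trans[OF rel y(2)] q(3) by (intro exI[of _ y]) simp
  qed
qed simp

lemma legal_play_reduced:
  assumes "egcm M n" "regular_position M n lam" "\<forall>k<n. 0 \<le> lam k" "legal_play M n lam p"
  shows "cox_length (cox_class M n p) = length p"
proof -
  obtain t where t: "(p, t) \<in> cox_rel M n" "length t = cox_length (cox_class M n p)"
    using cox_length_witness by blast
  have "set t \<subseteq> {..<n}" using cox_rel_set[OF t(1) legal_play_set[OF assms(4)]] .
  then obtain q where q: "legal_play M n lam q" "(t, q) \<in> cox_rel M n" "length q \<le> length t"
    using legal_play_representative[OF assms(1-3)] by blast
  have "play M lam p = play M lam q" using play_cox_rel[OF assms(1) cox_rel_trans[OF t(1) q(2)]] .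
  then have "game_sequence M n (\<lambda>j. - play M lam p j) (rev p)"
            "game_sequence M n (\<lambda>j. - play M lam p j) (rev q)"
    using game_sequence_rev[OF assms(1,4,3)] game_sequence_rev[OF assms(1) q(1) assms(3)]
    by simp_all
  then have "length q = length p" using game_sequences_equivalent[OF assms(1)] by fastforce
  then show ?thesis using q(3) t(2) cox_length_le_length[of M n p] by simp
qed

section \<open>Perturbing a dominant position\<close>

definition sign_stable :: "(nat \<Rightarrow> nat \<Rightarrow> real) \<Rightarrow> nat \<Rightarrow> (nat \<Rightarrow> real) \<Rightarrow> (nat \<Rightarrow> real) \<Rightarrow> bool" where
  "sign_stable M n lam lam' \<longleftrightarrow> (\<forall>w k. set w \<subseteq> {..<n} \<longrightarrow> k < n \<longrightarrow>
     (0 < play M lam w k \<longrightarrow> 0 < play M lam' w k) \<and> (play M lam w k < 0 \<longrightarrow> play M lam' w k < 0))"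

lemma sign_stable_uminus:
  "sign_stable M n lam lam' \<Longrightarrow> sign_stable M n (\<lambda>j. - lam j) (\<lambda>j. - lam' j)"
  unfolding sign_stable_def by (simp add: play_uminus)

lemma legal_play_sign_stable:
  assumes "sign_stable M n lam lam'" "set x \<subseteq> {..<n}" "legal_play M n (play M lam x) w"
  shows "legal_play M n (play M lam' x) w"
  using assms(2,3)
proof (induction w arbitrary: x)
  case (Cons i w)
  then have "i < n" "0 < play M lam x i" "legal_play M n (play M lam (x @ [i])) w" by auto
  then show ?case
    using Cons.IH[of "x @ [i]"] Cons.prems(1) assms(1) unfolding sign_stable_def by auto
qed simp

definition unit_position :: "nat \<Rightarrow> nat \<Rightarrow> real" where
  "unit_position l = (\<lambda>m. if m = l then 1 else 0)"

definition moment_curve :: "nat \<Rightarrow> real \<Rightarrow> nat \<Rightarrow> real" where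
  "moment_curve n t = (\<lambda>m. if m < n then t ^ Suc m else 0)"

lemma sum_unit_position: "(\<Sum>l<n. c l * unit_position l m) = (if m < n then c m else 0)"
  by (simp add: unit_position_def if_distrib[of "(*) _"] cong: if_cong)

lemma play_moment_curve:
  "play M (\<lambda>m. lam m + moment_curve n t m) w k
     = play M lam w k + (\<Sum>l<n. t ^ Suc l * play M (unit_position l) w k)"
proof -
  have "moment_curve n t = (\<lambda>m. \<Sum>l<n. t ^ Suc l * unit_position l m)"
    by (rule ext) (simp add: moment_curve_def sum_unit_position)
  then show ?thesis by (simp add: play_add play_sum play_scale)
qed

lemma play_eq_self: "\<forall>m<n. pos m = 0 \<Longrightarrow> set w \<subseteq> {..<n} \<Longrightarrow> play M pos w = pos"
  by (induction w) (auto simp: fire_eq_self)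

lemma play_unit_position_nonzero:
  assumes "egcm M n" "set w \<subseteq> {..<n}" "k < n"
  shows "\<exists>l<n. play M (unit_position l) w k \<noteq> 0"
proof (rule ccontr)
  assume "\<not> ?thesis"
  then have zero: "\<And>l. l < n \<Longrightarrow> play M (unit_position l) w k = 0" by auto
  define nu where "nu = play M (unit_position k) (rev w)"
  define high where "high = (\<lambda>m. if m < n then 0 else nu m)"
  have "play M nu w = unit_position k"
    using play_rev_cancel[OF assms(1), of "rev w"] assms(2) by (simp add: nu_def)
  then have "1 = play M nu w k" by (simp add: unit_position_def)
  also have "nu = (\<lambda>m. (\<Sum>l<n. nu l * unit_position l m) + high m)"
    by (rule ext) (simp add: high_def sum_unit_position)
  also have "play M \<dots> w k = (\<Sum>l<n. nu l * play M (unit_position l) w k) + play M high w k"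
    by (simp add: play_add play_sum play_scale)
  also have "\<dots> = 0"
    using zero play_eq_self[of n high w M] assms(2,3) by (simp add: high_def)
  finally show False by simp
qed

definition moment_poly :: "((nat \<Rightarrow> real) \<Rightarrow> real) \<Rightarrow> (nat \<Rightarrow> real) \<Rightarrow> nat \<Rightarrow> real poly" where
  "moment_poly f lam n = [:f lam:] + (\<Sum>l<n. monom (f (unit_position l)) (Suc l))"

lemma poly_moment_poly:
  "poly (moment_poly f lam n) t = f lam + (\<Sum>l<n. t ^ Suc l * f (unit_position l))"
  by (simp add: moment_poly_def poly_sum poly_monom mult.commute)

lemma coeff_moment_poly: "l < n \<Longrightarrow> coeff (moment_poly f lam n) (Suc l) = f (unit_position l)"
  by (simp add: moment_poly_def coeff_sum)

lemma eventually_poly_sign: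
  fixes p :: "real poly"
  assumes "p \<noteq> 0"
  shows "\<forall>\<^sub>F t in at_right 0. poly p t \<noteq> 0 \<and>
           (0 < poly p 0 \<longrightarrow> 0 < poly p t) \<and> (poly p 0 < 0 \<longrightarrow> poly p t < 0)"
proof -
  have "\<forall>\<^sub>F t in at_right 0. \<forall>r\<in>{r. poly p r = 0}. t \<noteq> r"
    by (intro eventually_ball_finite poly_roots_finite[OF assms] ballI eventually_neq_at_within)
  then have nonzero: "\<forall>\<^sub>F t in at_right 0. poly p t \<noteq> 0" by (rule eventually_mono) auto
  have lim: "((\<lambda>t. poly p t) \<longlongrightarrow> poly p 0) (at_right 0)" by (intro tendsto_intros)
  have pos: "\<forall>\<^sub>F t in at_right 0. 0 < poly p 0 \<longrightarrow> 0 < poly p t"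
    using order_tendstoD(1)[OF lim, of 0] by (cases "0 < poly p 0") (auto elim: eventually_mono)
  have neg: "\<forall>\<^sub>F t in at_right 0. poly p 0 < 0 \<longrightarrow> poly p t < 0"
    using order_tendstoD(2)[OF lim, of 0] by (cases "poly p 0 < 0") (auto elim: eventually_mono)
  from nonzero pos neg show ?thesis by eventually_elim blast
qed

lemma exists_sign_preserving_point:
  fixes P :: "real poly set"
  assumes "finite P" "\<And>p. p \<in> P \<Longrightarrow> p \<noteq> 0"
  shows "\<exists>t>0. \<forall>p\<in>P. poly p t \<noteq> 0 \<and>
           (0 < poly p 0 \<longrightarrow> 0 < poly p t) \<and> (poly p 0 < 0 \<longrightarrow> poly p t < 0)"
proof -
  have "\<forall>\<^sub>F t in at_right 0. \<forall>p\<in>P. poly p t \<noteq> 0 \<and>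
      (0 < poly p 0 \<longrightarrow> 0 < poly p t) \<and> (poly p 0 < 0 \<longrightarrow> poly p t < 0)"
    using assms by (intro eventually_ball_finite ballI eventually_poly_sign)
  with eventually_at_right_less have "\<forall>\<^sub>F t in at_right 0. 0 < t \<and> (\<forall>p\<in>P. poly p t \<noteq> 0 \<and>
      (0 < poly p 0 \<longrightarrow> 0 < poly p t) \<and> (poly p 0 < 0 \<longrightarrow> poly p t < 0))"
    by (rule eventually_conj)
  then show ?thesis using eventually_happens'[OF trivial_limit_at_right_real] by blast
qed

lemma finite_play_maps:
  assumes "egcm M n" "finite (cox_group M n)"
  shows "finite ((\<lambda>w pos. play M pos w) ` {w. set w \<subseteq> {..<n}})"
proof (rule finite_subset)
  show "(\<lambda>w pos. play M pos w) ` {w. set w \<subseteq> {..<n}}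
      \<subseteq> (\<lambda>c pos. play M pos (SOME w. w \<in> c)) ` cox_group M n"
  proof clarify
    fix w assume w: "set w \<subseteq> {..<n}"
    have "(SOME v. v \<in> cox_class M n w) \<in> cox_class M n w" by (rule someI[of _ w]) simp
    then have "(\<lambda>pos. play M pos w) = (\<lambda>pos. play M pos (SOME v. v \<in> cox_class M n w))"
      using play_cox_rel[OF assms(1)] by auto
    then show "(\<lambda>pos. play M pos w) \<in> (\<lambda>c pos. play M pos (SOME w. w \<in> c)) ` cox_group M n"
      using cox_class_in_group[OF w] by blast
  qed
qed (use assms(2) in simp)

text \<open>Since W is finite, only finitely many coordinate functionals of images matter; each of them is
  nonzero on some unit position, so along the moment curve it is a nonzero polynomial in t. For
  small t > 0 none of these polynomials vanishes and none changes the sign it has at t = 0.\<close>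

lemma exists_regular_perturbation:
  assumes "egcm M n" "finite (cox_group M n)" "\<forall>i<n. 0 \<le> lam i"
  obtains lam' where "regular_position M n lam'" "\<forall>i<n. 0 < lam' i" "sign_stable M n lam lam'"
proof -
  define maps where "maps = (\<lambda>w pos. play M pos w) ` {w. set w \<subseteq> {..<n}}"
  define P where "P = (\<lambda>(F, k). moment_poly (\<lambda>pos. F pos k) lam n) ` (maps \<times> {..<n})"
  have P: "moment_poly (\<lambda>pos. play M pos w k) lam n \<in> P" if "set w \<subseteq> {..<n}" "k < n" for w k
    using that unfolding P_def maps_def by force
  have "p \<noteq> 0" if "p \<in> P" for p
  proof -
    obtain w k where wk: "set w \<subseteq> {..<n}" "k < n" "p = moment_poly (\<lambda>pos. play M pos w k) lam n"
      using \<open>p \<in> P\<close> unfolding P_def maps_def by auto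
    then obtain l where "l < n" "play M (unit_position l) w k \<noteq> 0"
      using play_unit_position_nonzero[OF assms(1)] by blast
    then have "coeff p (Suc l) \<noteq> 0" using wk(3) coeff_moment_poly[of l n] by simp
    then show ?thesis by auto
  qed
  moreover have "finite P" using finite_play_maps[OF assms(1,2)] by (simp add: P_def maps_def)
  ultimately obtain t where t: "0 < t" "\<forall>p\<in>P. poly p t \<noteq> 0 \<and>
      (0 < poly p 0 \<longrightarrow> 0 < poly p t) \<and> (poly p 0 < 0 \<longrightarrow> poly p t < 0)"
    using exists_sign_preserving_point by blast
  define lam' where "lam' = (\<lambda>m. lam m + moment_curve n t m)"
  have "poly (moment_poly (\<lambda>pos. play M pos w k) lam n) t = play M lam' w k" for w k
    by (simp add: lam'_def poly_moment_poly play_moment_curve)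
  moreover have "poly (moment_poly (\<lambda>pos. play M pos w k) lam n) 0 = play M lam w k" for w k
    by (simp add: poly_moment_poly)
  ultimately have "play M lam' w k \<noteq> 0 \<and> (0 < play M lam w k \<longrightarrow> 0 < play M lam' w k) \<and>
      (play M lam w k < 0 \<longrightarrow> play M lam' w k < 0)" if "set w \<subseteq> {..<n}" "k < n" for w k
    using t(2) P[OF that] by metis
  moreover have "\<forall>i<n. 0 < lam' i"
    using assms(3) t(1) by (simp add: lam'_def moment_curve_def add_nonneg_pos)
  ultimately show ?thesis
    using that[of lam'] unfolding regular_position_def sign_stable_def by blast
qed

section \<open>Game sequences from a face of the dominant chamber\<close>

lemma in_C_nonneg: "J \<subseteq> {..<n} \<Longrightarrow> in_C n J lam \<Longrightarrow> \<forall>i<n. 0 \<le> lam i"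
  unfolding in_C_def by (metis less_imp_le order_refl)

locale perturbed_face =
  fixes M :: "nat \<Rightarrow> nat \<Rightarrow> real" and n :: nat and J :: "nat set"
    and w0 w0J :: "nat list set" and lam lam' :: "nat \<Rightarrow> real"
  assumes egcm: "egcm M n"
    and longest: "longest_element (cox_group M n) w0"
    and J: "J \<subseteq> {..<n}"
    and longest_J: "longest_element (parabolic M n J) w0J"
    and lam: "in_C n J lam"
    and regular: "regular_position M n lam'"
    and lam'_pos: "\<forall>i<n. 0 < lam' i"
    and stable: "sign_stable M n lam lam'"
begin

lemma lam'_nonneg: "\<forall>i<n. 0 \<le> lam' i"
  using lam'_pos by (simp add: less_imp_le)

lemma play_parabolic: "set x \<subseteq> J \<Longrightarrow> play M lam x = lam"
  using lam by (induction x) (auto simp: in_C_def fire_eq_self)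

lemma legal_play_lam'_reduced: "legal_play M n lam' p \<Longrightarrow> cox_length (cox_class M n p) = length p"
  by (rule legal_play_reduced[OF egcm regular lam'_nonneg])

lemma cox_length_le_longest: "set w \<subseteq> {..<n} \<Longrightarrow> cox_length (cox_class M n w) \<le> cox_length w0"
  using longest cox_class_in_group unfolding longest_element_def by blast

lemma cox_length_le_longest_J:
  assumes "set x \<subseteq> J"
  shows "cox_length (cox_class M n x) \<le> cox_length w0J"
proof -
  have "cox_class M n x \<in> parabolic M n J"
    using assms J cox_class_in_group[of x n M] cox_rel_refl[of x M n]
    unfolding parabolic_def by blast
  then show ?thesis using longest_J unfolding longest_element_def by blast
qed

lemma legal_play_append_parabolic:
  assumes "legal_play M n lam' x" "set x \<subseteq> J" "legal_play M n lam p"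
  shows "legal_play M n lam' (x @ p)"
  using legal_play_sign_stable[OF stable legal_play_set[OF assms(1)]] assms play_parabolic
  by (simp add: legal_play_append)

lemma legal_play_length_le: "legal_play M n lam p \<Longrightarrow> length p \<le> cox_length w0"
  using legal_play_sign_stable[OF stable, of "[]"] legal_play_lam'_reduced
    cox_length_le_longest[OF legal_play_set] by fastforce

lemma legal_reduced_word_longest_J:
  obtains x where "legal_play M n lam' x" "play M lam x = lam" "length x = cox_length w0J"
proof -
  obtain v where v: "v \<in> w0J" "set v \<subseteq> J" and w0J: "w0J \<in> cox_group M n"
    using longest_J unfolding longest_element_def parabolic_def by blast
  have w0J_class: "w0J = cox_class M n v" by (rule cox_group_elem_eq_class[OF w0J v(1)])
  obtain t where t: "(v, t) \<in> cox_rel M n" "length t = cox_length w0J"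
    using cox_length_witness w0J_class by blast
  have "set t \<subseteq> {..<n}" using cox_rel_set[OF t(1)] v(2) J by blast
  then obtain x where x: "legal_play M n lam' x" "(t, x) \<in> cox_rel M n" "length x \<le> length t"
    using legal_play_representative[OF egcm regular lam'_nonneg] by blast
  have vx: "(v, x) \<in> cox_rel M n" using cox_rel_trans[OF t(1) x(2)] .
  have "length x = cox_length w0J"
    using legal_play_lam'_reduced[OF x(1)] cox_class_eq[OF vx] w0J_class x(3) t(2)
      cox_length_le_length[of M n x] by simp
  moreover have "play M lam x = lam" using play_cox_rel[OF egcm vx] play_parabolic[OF v(2)] by simp
  ultimately show ?thesis using that x(1) by blast
qed

lemma game_length_upper: "game_sequence M n lam s \<Longrightarrow> length s + cox_length w0J \<le> cox_length w0"
proof -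
  assume "game_sequence M n lam s"
  then have s: "legal_play M n lam s" by (simp add: game_sequence_def)
  obtain x where x: "legal_play M n lam' x" "play M lam x = lam" "length x = cox_length w0J"
    using legal_reduced_word_longest_J by blast
  have "legal_play M n (play M lam' x) s"
    using legal_play_sign_stable[OF stable legal_play_set[OF x(1)]] s x(2) by simp
  then have xs: "legal_play M n lam' (x @ s)" using x(1) by (simp add: legal_play_append)
  show ?thesis
    using legal_play_lam'_reduced[OF xs] cox_length_le_longest[OF legal_play_set[OF xs]] x(3)
    by simp
qed

text \<open>A node outside J has a negative coordinate in the unperturbed game, hence, by sign
  stability, in the perturbed one.\<close>

lemma legal_play_from_negated_in_J:
  assumes "set X \<subseteq> {..<n}" "play M lam X = lam" "legal_play M n (\<lambda>j. - play M lam' X j) z"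
  shows "set z \<subseteq> J"
  using assms
proof (induction z arbitrary: X)
  case (Cons k z)
  then have k: "k < n" "play M lam' X k < 0"
    and legal: "legal_play M n (\<lambda>j. - play M lam' (X @ [k]) j) z"
    by (auto simp: fire_def)
  have "k \<in> J"
  proof (rule ccontr)
    assume "k \<notin> J"
    then have "0 < play M lam X k" using lam k(1) Cons.prems(2) by (simp add: in_C_def)
    then show False using stable Cons.prems(1) k unfolding sign_stable_def by force
  qed
  then have "play M lam (X @ [k]) = lam"
    using lam Cons.prems(2) by (simp add: in_C_def fire_eq_self)
  then show ?case using Cons.IH[of "X @ [k]"] Cons.prems(1) k(1) legal \<open>k \<in> J\<close> by simp
qed simp

text \<open>A node i with zero coordinate after the unperturbed part p of a decomposition can be moved
  into the parabolic part: reversing x p i gives a game sequence, which by strong convergence is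
  equivalent to one starting with rev p and then firing only nodes of J.\<close>

lemma absorb_zero_coordinate:
  assumes x: "legal_play M n lam' x" "set x \<subseteq> J" and p: "legal_play M n lam p"
    and i: "i < n" "play M lam p i = 0" "0 < play M lam' (x @ p) i"
  shows "\<exists>z. legal_play M n lam' z \<and> set z \<subseteq> J \<and> length z = Suc (length x) \<and>
             (z @ p, x @ p @ [i]) \<in> cox_rel M n"
proof -
  define X where "X = x @ p @ [i]"
  define nu where "nu = (\<lambda>j. - play M lam' X j)"
  have legal_X: "legal_play M n lam' X"
    using legal_play_snoc[of M n lam' "x @ p" i] legal_play_append_parabolic[OF x p] i
    by (simp add: X_def)
  have X: "set X \<subseteq> {..<n}" using legal_play_set[OF legal_X] .
  have game_X: "game_sequence M n nu (rev X)"
    unfolding nu_def by (rule game_sequence_rev[OF egcm legal_X lam'_nonneg])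
  have lam_X: "play M lam X = play M lam p"
    using i(2) play_parabolic[OF x(2)] by (simp add: X_def fire_eq_self)
  have "legal_play M n (\<lambda>j. - play M lam p j) (rev p)" by (rule legal_play_rev[OF egcm p])
  then have "legal_play M n (play M (\<lambda>j. - lam j) X) (rev p)" by (simp add: lam_X play_uminus)
  then have "legal_play M n nu (rev p)"
    using legal_play_sign_stable[OF sign_stable_uminus[OF stable] X]
    by (simp add: nu_def play_uminus)
  then obtain z where game_z: "game_sequence M n nu (rev p @ z)"
    using legal_play_extends_to_game_sequence[OF egcm game_X] by blast
  then have len: "length (rev p @ z) = length X" and rel: "(rev p @ z, rev X) \<in> cox_rel M n"
    using game_sequences_equivalent[OF egcm game_X] by fastforce+
  have lam_back: "play M lam (X @ rev p) = lam"
    using lam_X play_rev_cancel[OF egcm legal_play_set[OF p]] by simp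
  have legal_z: "legal_play M n (\<lambda>j. - play M lam' (X @ rev p) j) z"
    using game_z by (simp add: game_sequence_def legal_play_append nu_def play_uminus)
  have "set (X @ rev p) \<subseteq> {..<n}" using X legal_play_set[OF p] by auto
  then have zJ: "set z \<subseteq> J" using legal_play_from_negated_in_J lam_back legal_z by blast
  have "play M nu (rev p @ z) = play M nu (rev X)" by (rule play_cox_rel[OF egcm rel])
  also have "\<dots> = (\<lambda>j. - lam' j)" using play_rev_cancel[OF egcm X] by (simp add: nu_def play_uminus)
  finally have "legal_play M n lam' (rev z @ p)"
    using legal_play_rev[OF egcm, of nu "rev p @ z"] game_z by (simp add: game_sequence_def)
  moreover have "(rev z @ p, X) \<in> cox_rel M n" using cox_rel_rev[OF rel] by simp
  ultimately show ?thesis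
    using zJ len by (intro exI[of _ "rev z"]) (simp add: X_def legal_play_append)
qed

lemma decomposition:
  "set r \<subseteq> {..<n} \<Longrightarrow> \<exists>x p. (r, x @ p) \<in> cox_rel M n \<and> legal_play M n lam' x \<and> set x \<subseteq> J \<and>
     legal_play M n lam p \<and> length x + length p \<le> length r"
proof (induction "length r" arbitrary: r rule: less_induct)
  case less
  show ?case
  proof (cases r rule: rev_exhaust)
    case (snoc r' i)
    have i: "i < n" using less.prems snoc by simp
    obtain x p where xp: "(r', x @ p) \<in> cox_rel M n" "legal_play M n lam' x" "set x \<subseteq> J"
       "legal_play M n lam p" "length x + length p \<le> length r'"
      using less.hyps[of r'] less.prems snoc by auto
    have r: "(r, x @ p @ [i]) \<in> cox_rel M n"
      using cox_rel_append[OF xp(1) cox_rel_refl] snoc by simp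
    have legal_xp: "legal_play M n lam' (x @ p)" by (rule legal_play_append_parabolic[OF xp(2-4)])
    have lam_xp: "play M lam (x @ p) = play M lam p" using play_parabolic[OF xp(3)] by simp
    have "play M lam' (x @ p) i \<noteq> 0"
      using regular legal_play_set[OF legal_xp] i unfolding regular_position_def by blast
    moreover have "play M lam (x @ p) i < 0 \<longrightarrow> play M lam' (x @ p) i < 0"
      using stable legal_play_set[OF legal_xp] i unfolding sign_stable_def by blast
    ultimately consider (negative) "play M lam' (x @ p) i < 0"
      | (positive) "0 < play M lam p i" | (zero) "play M lam p i = 0" "0 < play M lam' (x @ p) i"
      using lam_xp by fastforce
    then show ?thesis
    proof cases
      case negative
      then obtain y where y: "legal_play M n lam' y" "((x @ p) @ [i], y) \<in> cox_rel M n"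
          "length y + 1 = length (x @ p)"
        using negative_coordinate_shortens[OF egcm lam'_nonneg legal_xp i] by blast
      then have ry: "(r, y) \<in> cox_rel M n" using r cox_rel_trans by auto
      have "length y < length r" using y(3) xp(5) snoc by simp
      then obtain x' p' where "(y, x' @ p') \<in> cox_rel M n" "legal_play M n lam' x'" "set x' \<subseteq> J"
          "legal_play M n lam p'" "length x' + length p' \<le> length y"
        using less.hyps[OF _ legal_play_set[OF y(1)]] by blast
      moreover have "(r, x' @ p') \<in> cox_rel M n" using cox_rel_trans[OF ry calculation(1)] .
      ultimately show ?thesis using \<open>length y < length r\<close> by force
    next
      case positive
      then have "legal_play M n lam (p @ [i])" using xp(4) i by (simp add: legal_play_snoc)
      then show ?thesis using r xp(2,3,5) snoc by (intro exI[of _ x] exI[of _ "p @ [i]"]) simp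
    next
      case zero
      then obtain z where "legal_play M n lam' z" "set z \<subseteq> J" "length z = Suc (length x)"
          "(z @ p, x @ p @ [i]) \<in> cox_rel M n"
        using absorb_zero_coordinate[OF xp(2-4) i] by blast
      then show ?thesis using r xp(4,5) snoc
        by (intro exI[of _ z] exI[of _ p]) (auto intro: cox_rel_trans cox_rel_sym)
    qed
  qed simp
qed

lemma game_length_lower: "game_sequence M n lam s \<Longrightarrow> cox_length w0 \<le> cox_length w0J + length s"
proof -
  assume s: "game_sequence M n lam s"
  obtain r where r: "set r \<subseteq> {..<n}" "w0 = cox_class M n r" "length r = cox_length w0"
    using cox_group_reduced_word longest unfolding longest_element_def by blast
  obtain x p where xp: "(r, x @ p) \<in> cox_rel M n" "legal_play M n lam' x" "set x \<subseteq> J"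
      "legal_play M n lam p" "length x + length p \<le> length r"
    using decomposition[OF r(1)] by blast
  have "cox_length w0 \<le> length x + length p"
    using cox_class_eq[OF xp(1)] r(2) cox_length_le_length[of M n "x @ p"] by simp
  moreover have "length x \<le> cox_length w0J"
    using legal_play_lam'_reduced[OF xp(2)] cox_length_le_longest_J[OF xp(3)] by simp
  moreover have "length p \<le> length s" by (rule game_sequence_length_max[OF egcm s xp(4)])
  ultimately show ?thesis by simp
qed

end

theorem proposition5p3:
  fixes M :: "nat \<Rightarrow> nat \<Rightarrow> real" and n :: nat and J :: "nat set"
    and w0 w0J :: "nat list set" and pos :: "nat \<Rightarrow> real"
  assumes "egcm M n"
    and "finite (cox_group M n)"
    and "longest_element (cox_group M n) w0"
    and "J \<subseteq> {..<n}"
    and "longest_element (parabolic M n J) w0J"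
    and "in_C n J pos"
  shows "(\<forall>s. game_sequence M n pos s \<longrightarrow> length s = cox_length w0 - cox_length w0J)
       \<and> \<not> (\<exists>f. infinite_game M n pos f)"
proof -
  have "\<forall>i<n. 0 \<le> pos i" by (rule in_C_nonneg[OF assms(4,6)])
  then obtain lam' where "regular_position M n lam'" "\<forall>i<n. 0 < lam' i" "sign_stable M n pos lam'"
    using exists_regular_perturbation[OF assms(1,2)] by blast
  then interpret perturbed_face M n J w0 w0J pos lam'
    using assms by unfold_locales
  have "length s = cox_length w0 - cox_length w0J" if "game_sequence M n pos s" for s
    using game_length_upper[OF that] game_length_lower[OF that] by simp
  moreover have "\<not> infinite_game M n pos f" for f
  proof
    assume "infinite_game M n pos f"
    then have "legal_play M n pos (map f [0..<Suc (cox_length w0)])"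
      by (simp add: infinite_game_def del: upt_Suc)
    then show False using legal_play_length_le by fastforce
  qed
  ultimately show ?thesis by blast
qed

end
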